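(* Let $p,q$ be positive integers with $p+q$ odd, let $n\ge3$ be odd, and let $s$ be a nonempty finite sequence of elements of $\{p,q\}$. The permutation $x\mapsto A^{p,q}_n(x,s)$ of $\{p,q\}^n$ has exactly two orbits (cycles) of length $2^{\lceil n/2\rceil}$ if the length $|s|$ of $s$ is odd and the sum $\Sigma(s)$ of the entries of $s$ is odd; otherwise it has no orbits of length $2^{\lceil n/2\rceil}$.
   Context: Define $\mathrm{Opp}(p)=q$, $\mathrm{Opp}(q)=p$. For $x\in\{p,q\}$ and a finite sequence $s=(s_1,\dots,s_m)$ of positive integers, $RLD^{p,q}(x,s)$ is the sequence over $\{p,q\}$ consisting of $s_1$ copies of $x$, then $s_2$ copies of $\mathrm{Opp}(x)$, then $s_3$ copies of $x$, and so on alternately. For $n\ge1$ and $x=(x_1,\dots,x_n)\in\{p,q\}^n$: $RLD^{p,q}_1(x_1,s)=RLD^{p,q}(x_1,s)$ and $RLD^{p,q}_n(x_{1:n},s)=RLD^{p,q}(x_n, RLD^{p,q}_{n-1}(x_{1:n-1},s))$. For a nonempty sequence $t$ over $\{p,q\}$, $\mathrm{OppEnd}(t)=\mathrm{Opp}(\text{last entry of } t)$. The automaton $A^{p,q}_n$ has state set $\{p,q\}^n$; for a state $x$ and a nonempty finite sequence $s$ over $\{p,q\}$, $A^{p,q}_n(x,s)$ is the state whose $i$-th coordinate is $\mathrm{OppEnd}(RLD^{p,q}_i(x_{1:i},s))$, $i=1,\dots,n$. The map $x\mapsto A^{p,q}_n(x,s)$ is a permutation of $\{p,q\}^n$. *)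

theory Defs
  imports Complex_Main
begin

definition Opp :: "nat \<Rightarrow> nat \<Rightarrow> nat \<Rightarrow> nat" where
  "Opp p q y = (if y = p then q else p)"

definition RLD :: "nat \<Rightarrow> nat \<Rightarrow> nat \<Rightarrow> nat list \<Rightarrow> nat list" where
  "RLD p q x s =
     concat (map (\<lambda>i. replicate (s ! i) (if even i then x else Opp p q x)) [0..<length s])"

text \<open>RLD_n(x_{1:n}, s): RLD_1(x_1,s) = RLD(x_1,s), RLD_n = RLD(x_n, RLD_{n-1}(x_{1:n-1},s)).
  For the empty prefix this returns s itself (only used for prefixes of length at least 1).\<close>
definition RLDn :: "nat \<Rightarrow> nat \<Rightarrow> nat list \<Rightarrow> nat list \<Rightarrow> nat list" where
  "RLDn p q xs s = foldl (\<lambda>t y. RLD p q y t) s xs"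

definition OppEnd :: "nat \<Rightarrow> nat \<Rightarrow> nat list \<Rightarrow> nat" where
  "OppEnd p q t = Opp p q (last t)"

definition A :: "nat \<Rightarrow> nat \<Rightarrow> nat \<Rightarrow> nat list \<Rightarrow> nat list \<Rightarrow> nat list" where
  "A p q n s x = map (\<lambda>i. OppEnd p q (RLDn p q (take i x) s)) [1..<Suc n]"

definition states :: "nat \<Rightarrow> nat \<Rightarrow> nat \<Rightarrow> nat list set" where
  "states p q n = {x. length x = n \<and> set x \<subseteq> {p, q}}"

definition orbit_of :: "('a \<Rightarrow> 'a) \<Rightarrow> 'a \<Rightarrow> 'a set" where
  "orbit_of f x = range (\<lambda>k. (f ^^ k) x)"

definition num_orbits_of_length :: "('a \<Rightarrow> 'a) \<Rightarrow> 'a set \<Rightarrow> nat \<Rightarrow> nat" where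
  "num_orbits_of_length f X L = card {orbit_of f x | x. x \<in> X \<and> card (orbit_of f x) = L}"

end

theory Submission
  imports Defs "HOL-Combinatorics.Orbits" "HOL-Computational_Algebra.Primes"
begin

text \<open>Let f = A_n(-, s) with n = 2r + 1. Its k-th power is the automaton driven by the word s^k,
  and coordinate i of A_n(x, u) is x_i or its opposite according to the parity of the length of
  RLD_(i-1)(x_(1:i-1), u). If u fixes all states of length j, then u u fixes all states of length
  j + 2; hence f^(2^(r+1)) is the identity, all orbit lengths are powers of two, and the orbits of
  length 2^(r+1) consist of the states moved by f^(2^r), namely y @ [c] with RLD_2r(y, s^(2^r)) of
  odd length. Reading the first two letters a, b of y replaces s by RLD_2(a b, s s); a parity count
  then gives 2^(r+1) such prefixes when |s| and sum(s) are odd (exactly one choice of b keeps the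
  sum odd, because p + q is odd) and none otherwise.\<close>

section \<open>Orbits of periodic points\<close>

lemma orbit_of_eq_orbit: "x \<in> orbit f x \<Longrightarrow> orbit_of f x = orbit f x"
  using orbit_altdef_self_in[of x f] by (auto simp: orbit_of_def)

lemma self_in_orbit_if_funpow: "(f ^^ m) x = x \<Longrightarrow> 0 < m \<Longrightarrow> x \<in> orbit f x"
  by (force simp: orbit_altdef)

lemma orbit_eq_if_mem:
  assumes "x \<in> orbit f x" "y \<in> orbit f x"
  shows "orbit f y = orbit f x"
proof
  show "orbit f y \<subseteq> orbit f x"
    by (blast intro: orbit_trans[OF _ assms(2)])
  show "orbit f x \<subseteq> orbit f y"
    by (blast intro: orbit_trans[OF _ orbit_swap[OF assms]])
qed

lemma card_orbit_eq_funpow_dist1: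
  assumes "x \<in> orbit f x"
  shows "card (orbit f x) = funpow_dist1 f x x"
  unfolding orbit_conv_funpow_dist1[OF assms] by (simp add: card_image inj_on_funpow_dist1[OF assms])

lemma funpow_eq_self_iff_card_orbit_dvd:
  assumes "x \<in> orbit f x"
  shows "(f ^^ m) x = x \<longleftrightarrow> card (orbit f x) dvd m"
proof -
  define d where "d = card (orbit f x)"
  have d: "0 < d" "(f ^^ d) x = x"
    using assms funpow_dist1_prop[OF assms] by (simp_all add: d_def card_orbit_eq_funpow_dist1)
  have "(f ^^ m) x = (f ^^ (m mod d)) x"
    using funpow_mod_eq[OF d(2)] by simp
  moreover have "(f ^^ (m mod d)) x \<noteq> x" if "m mod d \<noteq> 0"
    using that d(1) funpow_dist1_least[of "m mod d" f x x]
    by (simp add: d_def card_orbit_eq_funpow_dist1[OF assms])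
  ultimately show ?thesis
    unfolding d_def[symmetric] dvd_eq_mod_eq_0 by (cases "m mod d = 0") simp_all
qed

lemma card_orbit_prime_power_iff:
  assumes "prime P" "(f ^^ P ^ Suc k) x = x"
  shows "card (orbit f x) = P ^ Suc k \<longleftrightarrow> (f ^^ P ^ k) x \<noteq> x"
proof -
  have P: "1 < P"
    using assms(1) by (rule prime_gt_1_nat)
  have x: "x \<in> orbit f x"
    using assms(2) P by (intro self_in_orbit_if_funpow[where m = "P ^ Suc k"]) simp_all
  have "card (orbit f x) dvd P ^ Suc k"
    using assms(2) funpow_eq_self_iff_card_orbit_dvd[OF x] by simp
  then obtain i where i: "i \<le> Suc k" "card (orbit f x) = P ^ i"
    using divides_primepow_nat[OF assms(1)] by blast
  have "(f ^^ P ^ k) x = x \<longleftrightarrow> i \<le> k"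
    using funpow_eq_self_iff_card_orbit_dvd[OF x, of "P ^ k"] i(2) dvd_power_iff_le[of P i k] P
    by simp
  moreover have "card (orbit f x) = P ^ Suc k \<longleftrightarrow> i = Suc k"
    by (simp only: i(2) power_inject_exp[OF P])
  ultimately show ?thesis
    using i(1) by linarith
qed

lemma num_orbits_of_length_mult_eq_card:
  assumes "finite X" "f ` X \<subseteq> X" "\<forall>x\<in>X. x \<in> orbit f x"
  shows "num_orbits_of_length f X L * L = card {x \<in> X. card (orbit f x) = L}"
proof -
  define T where "T = {x \<in> X. card (orbit f x) = L}"
  have orbit_subset: "orbit f x \<subseteq> X" if "x \<in> X" for x
  proof
    fix y
    assume "y \<in> orbit f x"
    then show "y \<in> X"
      by induction (use assms(2) that in auto)
  qed
  have orbit_of: "orbit_of f x = orbit f x" if "x \<in> X" for x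
    using assms(3) that by (simp add: orbit_of_eq_orbit)
  have "{orbit_of f x | x. x \<in> X \<and> card (orbit_of f x) = L}
      = {orbit f x | x. x \<in> X \<and> card (orbit f x) = L}"
    by (intro Collect_cong ex_cong1) (use orbit_of in auto)
  then have orbits: "{orbit_of f x | x. x \<in> X \<and> card (orbit_of f x) = L} = orbit f ` T"
    by (auto simp: T_def)
  have same_orbit: "orbit f y = orbit f x" if "x \<in> T" "y \<in> orbit f x" for x y
    using that assms(3) by (intro orbit_eq_if_mem) (auto simp: T_def)
  have disjoint: "orbit f x \<inter> orbit f y = {}" if "x \<in> T" "y \<in> T" "orbit f x \<noteq> orbit f y" for x y
    using same_orbit[OF that(1)] same_orbit[OF that(2)] that(3) by blast
  have "\<Union> (orbit f ` T) = T"
  proof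
    show "\<Union> (orbit f ` T) \<subseteq> T"
    proof
      fix y
      assume "y \<in> \<Union> (orbit f ` T)"
      then obtain x where x: "x \<in> T" "y \<in> orbit f x"
        by blast
      then show "y \<in> T"
        using same_orbit[OF x] orbit_subset by (auto simp: T_def)
    qed
    show "T \<subseteq> \<Union> (orbit f ` T)"
      using assms(3) by (auto simp: T_def)
  qed
  moreover have "L * card (orbit f ` T) = card (\<Union> (orbit f ` T))"
  proof (rule card_partition)
    show "finite (orbit f ` T)"
      using assms(1) by (simp add: T_def)
    show "finite (\<Union> (orbit f ` T))"
      by (rule finite_subset[OF _ assms(1)]) (use orbit_subset in \<open>auto simp: T_def\<close>)
    show "card c = L" if "c \<in> orbit f ` T" for c
      using that by (auto simp: T_def)
    show "c1 \<inter> c2 = {}" if "c1 \<in> orbit f ` T" "c2 \<in> orbit f ` T" "c1 \<noteq> c2" for c1 c2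
      using that disjoint by blast
  qed
  ultimately show ?thesis
    by (simp add: num_orbits_of_length_def orbits T_def mult.commute)
qed

section \<open>Run-length decoding\<close>

lemma Opp_mem: "Opp p q c \<in> {p, q}"
  by (simp add: Opp_def)

lemma Opp_neq: "p \<noteq> q \<Longrightarrow> Opp p q c \<noteq> c"
  by (simp add: Opp_def)

lemma Opp_Opp: "p \<noteq> q \<Longrightarrow> c \<in> {p, q} \<Longrightarrow> Opp p q (Opp p q c) = c"
  by (auto simp: Opp_def)

lemma RLD_Nil [simp]: "RLD p q c [] = []"
  by (simp add: RLD_def)

lemma RLD_snoc:
  "RLD p q c (t @ [h]) = RLD p q c t @ replicate h (if even (length t) then c else Opp p q c)"
  unfolding RLD_def by (auto simp: nth_append intro!: arg_cong[where f = concat] map_cong)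

lemma length_RLD [simp]: "length (RLD p q c t) = sum_list t"
  by (simp add: RLD_def length_concat comp_def map_nth)

lemma set_RLD: "set (RLD p q c t) \<subseteq> {c, Opp p q c}"
  by (auto simp: RLD_def)

lemma RLD_append:
  assumes "p \<noteq> q" "c \<in> {p, q}"
  shows "RLD p q c (u @ v) = RLD p q c u @ RLD p q (if even (length u) then c else Opp p q c) v"
proof (induction v rule: rev_induct)
  case (snoc h v)
  then show ?case
    using assms by (simp add: RLD_snoc flip: append_assoc) (simp add: Opp_Opp)
qed simp

lemma last_RLD:
  assumes "t \<noteq> []" "\<forall>h\<in>set t. 0 < h"
  shows "last (RLD p q c t) = (if odd (length t) then c else Opp p q c)"
  using assms by (induction t rule: rev_induct) (auto simp: RLD_snoc)

lemma sum_list_RLD_Opp: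
  assumes "p \<noteq> q" "c \<in> {p, q}"
  shows "sum_list (RLD p q c t) + sum_list (RLD p q (Opp p q c) t) = (p + q) * sum_list t"
proof (induction t rule: rev_induct)
  case (snoc h t)
  have "c + Opp p q c = p + q" "Opp p q c + Opp p q (Opp p q c) = p + q"
    using assms by (auto simp: Opp_def)
  then have "h * c + h * Opp p q c = h * (p + q)"
    "h * Opp p q c + h * Opp p q (Opp p q c) = h * (p + q)"
    by (metis add_mult_distrib2)+
  then show ?case
    using snoc by (simp add: RLD_snoc sum_list_replicate algebra_simps)
qed simp

lemma sum_list_RLD_append_self:
  assumes "p \<noteq> q" "c \<in> {p, q}" "odd (length t)"
  shows "sum_list (RLD p q c (t @ t)) = (p + q) * sum_list t"
  using assms sum_list_RLD_Opp[OF assms(1,2)] by (simp add: RLD_append)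

lemma RLDn_Nil [simp]: "RLDn p q [] u = u"
  by (simp add: RLDn_def)

lemma RLDn_Cons [simp]: "RLDn p q (c # y) u = RLDn p q y (RLD p q c u)"
  by (simp add: RLDn_def)

lemma RLDn_snoc [simp]: "RLDn p q (y @ [c]) u = RLD p q c (RLDn p q y u)"
  by (simp add: RLDn_def)

text \<open>\<open>u\<close> repeated \<open>2^m\<close> times, doubled on the inside so that \<open>pow2 (Suc r) s\<close> unfolds to
  \<open>pow2 r (s @ s)\<close> as needed in \<open>odd_prefixes_Suc\<close>.\<close>
fun pow2 :: "nat \<Rightarrow> 'a list \<Rightarrow> 'a list" where
  "pow2 0 u = u"
| "pow2 (Suc m) u = pow2 m (u @ u)"

lemma pow2_Suc_append: "pow2 (Suc m) u = pow2 m u @ pow2 m u"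
proof (induction m arbitrary: u)
  case (Suc m)
  then show ?case by (metis pow2.simps(2))
qed simp

lemma set_pow2 [simp]: "set (pow2 m u) = set u"
  by (induction m arbitrary: u) simp_all

lemma pow2_eq_Nil_iff [simp]: "pow2 m u = [] \<longleftrightarrow> u = []"
  by (induction m arbitrary: u) simp_all

lemma finite_states: "finite (states p q n)"
  using finite_lists_length_eq[of "{p, q}" n] by (simp add: states_def conj_commute)

section \<open>The automaton\<close>

locale alphabet =
  fixes p q :: nat
  assumes p_pos: "0 < p" and q_pos: "0 < q" and p_neq_q: "p \<noteq> q"
begin

definition word :: "nat list \<Rightarrow> bool" where
  "word u \<longleftrightarrow> u \<noteq> [] \<and> set u \<subseteq> {p, q}"

definition act :: "nat list \<Rightarrow> nat list \<Rightarrow> nat list" where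
  "act u y = A p q (length y) u y"

lemma word_RLD:
  assumes "word u" "c \<in> {p, q}"
  shows "word (RLD p q c u)"
proof -
  have "0 < sum_list u"
    using assms p_pos q_pos by (cases u) (auto simp: word_def)
  then have "RLD p q c u \<noteq> []"
    by (metis length_RLD list.size(3) less_irrefl)
  then show ?thesis
    using assms set_RLD[of p q c u] Opp_mem[of p q c] by (auto simp: word_def)
qed

lemma word_RLDn: "word u \<Longrightarrow> set y \<subseteq> {p, q} \<Longrightarrow> word (RLDn p q y u)"
  by (induction y arbitrary: u) (auto simp: word_RLD)

lemma act_Nil [simp]: "act u [] = []"
  by (simp add: act_def A_def)

lemma length_act [simp]: "length (act u y) = length y"
  unfolding act_def A_def by (simp only: length_map length_upt diff_Suc_1)

lemma set_act: "set (act u y) \<subseteq> {p, q}"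
  using Opp_mem by (auto simp: act_def A_def OppEnd_def)

lemma act_snoc:
  assumes "word u" "set y \<subseteq> {p, q}" "c \<in> {p, q}"
  shows "act u (y @ [c]) = act u y @ [if even (length (RLDn p q y u)) then c else Opp p q c]"
proof -
  have "map (\<lambda>i. OppEnd p q (RLDn p q (take i (y @ [c])) u)) [1..<Suc (length y)]
      = map (\<lambda>i. OppEnd p q (RLDn p q (take i y) u)) [1..<Suc (length y)]"
    by (rule map_cong) auto
  then have "act u (y @ [c]) = act u y @ [OppEnd p q (RLD p q c (RLDn p q y u))]"
    by (simp add: act_def A_def)
  moreover have "RLDn p q y u \<noteq> []" "\<forall>h\<in>set (RLDn p q y u). 0 < h"
    using assms word_RLDn[of u y] p_pos q_pos by (auto simp: word_def)
  ultimately show ?thesis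
    using assms(3) by (simp add: OppEnd_def last_RLD Opp_Opp p_neq_q)
qed

lemma RLDn_append:
  assumes "word u" "set y \<subseteq> {p, q}"
  shows "RLDn p q y (u @ v) = RLDn p q y u @ RLDn p q (act u y) v"
  using assms(2)
proof (induction y rule: rev_induct)
  case (snoc c y)
  then show ?case
    using assms(1) by (simp add: RLD_append p_neq_q act_snoc)
qed simp

lemma act_append:
  assumes "word u" "word v" "set y \<subseteq> {p, q}"
  shows "act (u @ v) y = act v (act u y)"
  using assms(3)
proof (induction y rule: rev_induct)
  case (snoc c y)
  have "word (u @ v)"
    using assms by (simp add: word_def)
  then show ?case
    using snoc assms set_act[of u y] Opp_mem[of p q c]
    by (simp add: act_snoc RLDn_append Opp_Opp p_neq_q)
qed simp

lemma word_pow2: "word u \<Longrightarrow> word (pow2 m u)"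
  by (simp add: word_def)

lemma RLDn_pow2:
  assumes "word w" "set y \<subseteq> {p, q}" "act w y = y"
  shows "RLDn p q y (pow2 m w) = pow2 m (RLDn p q y w)"
  using assms
proof (induction m arbitrary: w)
  case (Suc m)
  have "word (w @ w)" "act (w @ w) y = y"
    using Suc.prems by (simp_all add: word_def act_append)
  then show ?case
    using Suc by (simp add: RLDn_append)
qed simp

definition even_below :: "nat \<Rightarrow> nat list \<Rightarrow> bool" where
  "even_below j u \<longleftrightarrow> (\<forall>y. length y < j \<longrightarrow> set y \<subseteq> {p, q} \<longrightarrow> even (length (RLDn p q y u)))"

lemma even_below_0: "even_below 0 u"
  by (simp add: even_below_def)

lemma act_eq_self:
  assumes "word u" "even_below j u" "length y \<le> j" "set y \<subseteq> {p, q}"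
  shows "act u y = y"
  using assms(3,4)
proof (induction y rule: rev_induct)
  case (snoc c y)
  then have "even (length (RLDn p q y u))"
    using assms(2) by (simp add: even_below_def)
  then show ?case
    using snoc assms(1) by (simp add: act_snoc)
qed simp

text \<open>If \<open>u\<close> fixes \<open>y\<close>, then \<open>RLDn y (u @ u)\<close> is a list repeated twice; one level higher the
  length is a sum over such a list, hence even again.\<close>
lemma even_below_append_self:
  assumes "word u" "even_below j u"
  shows "even_below (j + 2) (u @ u)"
  unfolding even_below_def
proof (intro allI impI)
  fix y
  assume y: "length y < j + 2" "set y \<subseteq> {p, q}"
  show "even (length (RLDn p q y (u @ u)))"
  proof (cases "length y \<le> j")
    case True
    then show ?thesis
      using assms y by (simp add: RLDn_append act_eq_self)
  next
    case False
    then obtain x c where "y = x @ [c]"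
      by (metis le0 rev_exhaust list.size(3))
    moreover have "act u x = x"
      using y calculation assms by (intro act_eq_self) auto
    ultimately show ?thesis
      using assms y by (simp add: RLDn_append)
  qed
qed

lemma even_below_pow2:
  assumes "word u" "even_below j u"
  shows "even_below (j + 2 * m) (pow2 m u)"
  using assms
proof (induction m arbitrary: u j)
  case (Suc m)
  have "word (u @ u)"
    using Suc.prems by (simp add: word_def)
  then show ?case
    using Suc.IH[of "u @ u" "j + 2"] even_below_append_self[OF Suc.prems] by simp
qed simp

definition odd_prefixes :: "nat \<Rightarrow> nat list \<Rightarrow> nat list set" where
  "odd_prefixes r s =
     {y. length y = 2 * r \<and> set y \<subseteq> {p, q} \<and> odd (length (RLDn p q y (pow2 r s)))}"

lemma finite_odd_prefixes: "finite (odd_prefixes r s)"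
proof (rule finite_subset)
  show "odd_prefixes r s \<subseteq> {y. set y \<subseteq> {p, q} \<and> length y = 2 * r}"
    by (auto simp: odd_prefixes_def)
qed (rule finite_lists_length_eq, simp)

lemma odd_prefixes_0: "odd_prefixes 0 t = (if odd (length t) then {[]} else {})"
  by (auto simp: odd_prefixes_def)

lemma RLDn_Cons_Cons_pow2:
  assumes "word s" "a \<in> {p, q}" "b \<in> {p, q}"
  shows "RLDn p q (a # b # z) (pow2 r (s @ s)) = RLDn p q z (pow2 r (RLDn p q [a, b] (s @ s)))"
proof -
  have "word (s @ s)"
    using assms by (simp add: word_def)
  moreover have "act (s @ s) [a, b] = [a, b]"
    using assms calculation even_below_append_self[OF assms(1) even_below_0]
    by (intro act_eq_self) auto
  ultimately show ?thesis
    using assms RLDn_pow2[of "s @ s" "[a, b]" r] by simp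
qed

lemma odd_prefixes_Suc:
  assumes "word s"
  shows "odd_prefixes (Suc r) s = (\<lambda>(a, b, z). a # b # z) `
           (SIGMA a:{p, q}. SIGMA b:{p, q}. odd_prefixes r (RLDn p q [a, b] (s @ s)))"
proof (intro set_eqI iffI)
  fix y
  assume y: "y \<in> odd_prefixes (Suc r) s"
  then obtain a b z where "y = a # b # z"
    by (auto simp: odd_prefixes_def numeral_2_eq_2 length_Suc_conv)
  with y assms show "y \<in> (\<lambda>(a, b, z). a # b # z) `
      (SIGMA a:{p, q}. SIGMA b:{p, q}. odd_prefixes r (RLDn p q [a, b] (s @ s)))"
    by (auto simp: odd_prefixes_def RLDn_Cons_Cons_pow2 simp del: RLDn_Cons
        intro!: image_eqI[where x = "(a, b, z)"])
next
  fix y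
  assume "y \<in> (\<lambda>(a, b, z). a # b # z) `
      (SIGMA a:{p, q}. SIGMA b:{p, q}. odd_prefixes r (RLDn p q [a, b] (s @ s)))"
  with assms show "y \<in> odd_prefixes (Suc r) s"
    by (auto simp: odd_prefixes_def RLDn_Cons_Cons_pow2 simp del: RLDn_Cons)
qed

lemma card_odd_prefixes_Suc:
  assumes "word s"
  shows "card (odd_prefixes (Suc r) s) =
           (\<Sum>a\<in>{p, q}. \<Sum>b\<in>{p, q}. card (odd_prefixes r (RLDn p q [a, b] (s @ s))))"
proof -
  have "inj (\<lambda>(a, b, z). a # b # (z :: nat list))"
    by (auto simp: inj_def)
  then have "card (odd_prefixes (Suc r) s) =
      card (SIGMA a:{p, q}. SIGMA b:{p, q}. odd_prefixes r (RLDn p q [a, b] (s @ s)))"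
    unfolding odd_prefixes_Suc[OF assms] by (simp add: card_image inj_on_subset)
  also have "\<dots> = (\<Sum>a\<in>{p, q}. \<Sum>b\<in>{p, q}. card (odd_prefixes r (RLDn p q [a, b] (s @ s))))"
    by (simp add: finite_odd_prefixes)
  finally show ?thesis .
qed

lemma even_below_3:
  assumes "word s" "odd (length s)" "even (sum_list s)"
  shows "even_below 3 (s @ s)"
  unfolding even_below_def
proof (intro allI impI)
  fix y :: "nat list"
  assume y: "length y < 3" "set y \<subseteq> {p, q}"
  then consider "y = []" | a where "y = [a]" | a b where "y = [a, b]" "a \<in> {p, q}"
    by (cases y; cases "tl y") (auto simp: numeral_3_eq_3)
  then show "even (length (RLDn p q y (s @ s)))"
    by cases (use assms in \<open>simp_all add: sum_list_RLD_append_self p_neq_q\<close>)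
qed

lemma odd_prefixes_eq_empty:
  assumes "word s" "\<not> (odd (length s) \<and> odd (sum_list s))" "0 < r"
  shows "odd_prefixes r s = {}"
proof -
  have "even_below (1 + 2 * r) (pow2 r s)"
  proof (cases "even (length s)")
    case True
    then have "even_below 1 s"
      by (simp add: even_below_def)
    then show ?thesis
      by (rule even_below_pow2[OF assms(1)])
  next
    case False
    obtain k where r: "r = Suc k"
      using assms(3) gr0_conv_Suc by blast
    have "word (s @ s)"
      using assms(1) by (simp add: word_def)
    then have "even_below (3 + 2 * k) (pow2 k (s @ s))"
      using False assms even_below_3 even_below_pow2 by blast
    then show ?thesis
      by (simp add: r eval_nat_numeral)
  qed
  then show ?thesis
    by (auto simp: even_below_def odd_prefixes_def)
qed

lemma A_eq_act: "x \<in> states p q n \<Longrightarrow> A p q n u x = act u x"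
  by (simp add: states_def act_def)

lemma act_in_states: "x \<in> states p q n \<Longrightarrow> act u x \<in> states p q n"
  using set_act by (simp add: states_def)

lemma funpow_A_pow2:
  assumes "word s" "x \<in> states p q n"
  shows "(A p q n s ^^ 2 ^ m) x = act (pow2 m s) x"
  using assms(2)
proof (induction m arbitrary: x)
  case 0
  then show ?case by (simp add: A_eq_act)
next
  case (Suc m)
  have "(A p q n s ^^ 2 ^ Suc m) x = (A p q n s ^^ 2 ^ m) ((A p q n s ^^ 2 ^ m) x)"
    by (simp only: power_Suc mult_2 funpow_add comp_apply)
  also have "\<dots> = act (pow2 m s) (act (pow2 m s) x)"
    using Suc by (simp add: act_in_states)
  also have "\<dots> = act (pow2 m s @ pow2 m s) x"
    using assms(1) Suc.prems by (simp add: act_append word_pow2 states_def)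
  also have "\<dots> = act (pow2 (Suc m) s) x"
    by (simp only: pow2_Suc_append)
  finally show ?case .
qed

lemma funpow_A_period:
  assumes "word s" "x \<in> states p q (Suc (2 * r))"
  shows "(A p q (Suc (2 * r)) s ^^ 2 ^ Suc r) x = x"
  unfolding funpow_A_pow2[OF assms] using assms(2)
  by (intro act_eq_self[OF word_pow2[OF assms(1)] even_below_pow2[OF assms(1) even_below_0]])
    (auto simp: states_def)

lemma act_pow2_snoc:
  assumes "word s" "length y = 2 * r" "set y \<subseteq> {p, q}" "c \<in> {p, q}"
  shows "act (pow2 r s) (y @ [c]) = y @ [if even (length (RLDn p q y (pow2 r s))) then c else Opp p q c]"
proof -
  have "act (pow2 r s) y = y"
    using assms even_below_pow2[OF assms(1) even_below_0, of r]
    by (intro act_eq_self) (auto simp: word_pow2)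
  then show ?thesis
    using assms by (simp add: act_snoc word_pow2)
qed

lemma card_moved_states:
  assumes "word s"
  shows "card {x \<in> states p q (Suc (2 * r)). act (pow2 r s) x \<noteq> x} = 2 * card (odd_prefixes r s)"
proof -
  have "{x \<in> states p q (Suc (2 * r)). act (pow2 r s) x \<noteq> x}
      = (\<lambda>(y, c). y @ [c]) ` (odd_prefixes r s \<times> {p, q})"
  proof (intro set_eqI iffI)
    fix x
    assume x: "x \<in> {x \<in> states p q (Suc (2 * r)). act (pow2 r s) x \<noteq> x}"
    then have "length x = Suc (2 * r)"
      by (simp add: states_def)
    then obtain y c where xe: "x = y @ [c]"
      by (metis length_Suc_conv_rev)
    have y: "length y = 2 * r" "set y \<subseteq> {p, q}" "c \<in> {p, q}"
      using x by (auto simp: states_def xe)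
    then have "act (pow2 r s) x = y @ [if even (length (RLDn p q y (pow2 r s))) then c else Opp p q c]"
      using assms by (simp add: xe act_pow2_snoc)
    then have "odd (length (RLDn p q y (pow2 r s)))"
      using x xe by (auto split: if_splits)
    then show "x \<in> (\<lambda>(y, c). y @ [c]) ` (odd_prefixes r s \<times> {p, q})"
      using y by (intro image_eqI[where x = "(y, c)"]) (auto simp: odd_prefixes_def xe)
  next
    fix x
    assume "x \<in> (\<lambda>(y, c). y @ [c]) ` (odd_prefixes r s \<times> {p, q})"
    then obtain y c where xe: "x = y @ [c]" and y: "y \<in> odd_prefixes r s" and c: "c \<in> {p, q}"
      by auto
    have "act (pow2 r s) x = y @ [Opp p q c]"
      using y c assms by (simp add: xe odd_prefixes_def act_pow2_snoc)
    then show "x \<in> {x \<in> states p q (Suc (2 * r)). act (pow2 r s) x \<noteq> x}"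
      using y c Opp_neq[OF p_neq_q, of c] by (simp add: xe states_def odd_prefixes_def)
  qed
  moreover have "inj (\<lambda>(y, c). y @ [c :: nat])"
    by (auto simp: inj_def)
  ultimately show ?thesis
    using p_neq_q by (simp add: card_image inj_on_subset card_cartesian_product)
qed

lemma num_orbits_of_length_A:
  assumes "word s"
  shows "num_orbits_of_length (A p q (Suc (2 * r)) s) (states p q (Suc (2 * r))) (2 ^ Suc r) * 2 ^ Suc r
           = 2 * card (odd_prefixes r s)"
proof -
  let ?f = "A p q (Suc (2 * r)) s" and ?X = "states p q (Suc (2 * r))"
  have periodic: "(?f ^^ 2 ^ Suc r) x = x" if "x \<in> ?X" for x
    using funpow_A_period[OF assms that] .
  have "num_orbits_of_length ?f ?X (2 ^ Suc r) * 2 ^ Suc r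
      = card {x \<in> ?X. card (orbit ?f x) = 2 ^ Suc r}"
  proof (rule num_orbits_of_length_mult_eq_card)
    show "finite ?X"
      by (rule finite_states)
    show "?f ` ?X \<subseteq> ?X"
      by (auto simp: A_eq_act act_in_states)
    show "\<forall>x\<in>?X. x \<in> orbit ?f x"
      using periodic self_in_orbit_if_funpow[where f = ?f and m = "2 ^ Suc r"] by simp
  qed
  also have "\<dots> = card {x \<in> ?X. act (pow2 r s) x \<noteq> x}"
    using card_orbit_prime_power_iff[OF two_is_prime_nat periodic] funpow_A_pow2[OF assms]
    by (intro arg_cong[where f = card] Collect_cong) auto
  also have "\<dots> = 2 * card (odd_prefixes r s)"
    by (rule card_moved_states[OF assms])
  finally show ?thesis .
qed

end

locale odd_alphabet = alphabet +
  assumes odd_add: "odd (p + q)"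
begin

lemma odd_length_RLDn_pair:
  assumes "odd (length s)" "odd (sum_list s)" "a \<in> {p, q}"
  shows "odd (length (RLDn p q [a, b] (s @ s)))"
  using assms odd_add by (simp add: sum_list_RLD_append_self p_neq_q)

lemma odd_sum_list_RLDn_pair_iff:
  assumes "odd (length s)" "odd (sum_list s)" "a \<in> {p, q}"
  shows "odd (sum_list (RLDn p q [a, p] (s @ s))) \<longleftrightarrow> even (sum_list (RLDn p q [a, q] (s @ s)))"
proof -
  have "sum_list (RLDn p q [a, p] (s @ s)) + sum_list (RLDn p q [a, q] (s @ s))
      = (p + q) * ((p + q) * sum_list s)"
    using assms sum_list_RLD_Opp[OF p_neq_q, of p] p_neq_q
    by (simp add: sum_list_RLD_append_self Opp_def)
  then have "odd (sum_list (RLDn p q [a, p] (s @ s)) + sum_list (RLDn p q [a, q] (s @ s)))"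
    using assms(2) odd_add by simp
  then show ?thesis
    by simp
qed

lemma card_odd_prefixes:
  assumes "word s"
  shows "card (odd_prefixes (Suc r) s) = (if odd (length s) \<and> odd (sum_list s) then 2 ^ (r + 2) else 0)"
  using assms
proof (induction r arbitrary: s)
  case 0
  show ?case
  proof (cases "odd (length s) \<and> odd (sum_list s)")
    case True
    then have "card (odd_prefixes 0 (RLDn p q [a, b] (s @ s))) = 1" if "a \<in> {p, q}" for a b
      using that odd_length_RLDn_pair by (simp add: odd_prefixes_0)
    then show ?thesis
      using True card_odd_prefixes_Suc[OF "0.prems"] p_neq_q by simp
  qed (simp add: odd_prefixes_eq_empty "0.prems")
next
  case (Suc r)
  show ?case
  proof (cases "odd (length s) \<and> odd (sum_list s)")
    case True
    have "(\<Sum>b\<in>{p, q}. card (odd_prefixes (Suc r) (RLDn p q [a, b] (s @ s)))) = 2 ^ (r + 2)"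
      if "a \<in> {p, q}" for a
    proof -
      have "word (RLDn p q [a, b] (s @ s))" if "b \<in> {p, q}" for b
        using Suc.prems \<open>a \<in> {p, q}\<close> that by (intro word_RLDn) (auto simp: word_def)
      then show ?thesis
        using Suc.IH True that odd_length_RLDn_pair odd_sum_list_RLDn_pair_iff p_neq_q by auto
    qed
    then show ?thesis
      using True card_odd_prefixes_Suc[OF Suc.prems] p_neq_q by simp
  qed (simp add: odd_prefixes_eq_empty Suc.prems)
qed

end

lemma nat_ceiling_half_odd: "nat \<lceil>real (Suc (2 * m)) / 2\<rceil> = Suc m"
proof -
  have "real (Suc (2 * m)) / 2 = real m + 1 / 2"
    by simp
  then have "\<lceil>real (Suc (2 * m)) / 2\<rceil> = int m + 1"
    by (simp add: ceiling_eq_iff)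
  then show ?thesis
    by simp
qed

theorem theorem3:
  fixes p q n :: nat and s :: "nat list"
  assumes "p > 0" and "q > 0" and "odd (p + q)"
    and "odd n" and "n \<ge> 3"
    and "s \<noteq> []" and "set s \<subseteq> {p, q}"
  shows "num_orbits_of_length (A p q n s) (states p q n) (2 ^ nat \<lceil>real n / 2\<rceil>) =
           (if odd (length s) \<and> odd (sum_list s) then 2 else 0)"
proof -
  interpret odd_alphabet p q
    using assms(1-3) by unfold_locales auto
  obtain m where "n = Suc (2 * m)"
    using assms(4) by (metis oddE Suc_eq_plus1)
  moreover obtain k where "m = Suc k"
    using assms(5) calculation by (cases m) auto
  ultimately have n: "n = Suc (2 * Suc k)"
    by simp
  have s: "word s"
    using assms(6,7) by (simp add: word_def)
  define L :: nat where "L = 2 ^ Suc (Suc k)"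
  have "num_orbits_of_length (A p q n s) (states p q n) L * L = 2 * card (odd_prefixes (Suc k) s)"
    using num_orbits_of_length_A[OF s, of "Suc k"] unfolding n L_def .
  also have "\<dots> = (if odd (length s) \<and> odd (sum_list s) then 2 else 0) * L"
    using card_odd_prefixes[OF s, of k] by (simp add: L_def)
  finally have "num_orbits_of_length (A p q n s) (states p q n) L =
      (if odd (length s) \<and> odd (sum_list s) then 2 else 0)"
    using L_def by simp
  moreover have "2 ^ nat \<lceil>real n / 2\<rceil> = L"
    unfolding n L_def nat_ceiling_half_odd ..
  ultimately show ?thesis
    by simp
qed

end
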